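(* There exists a sequence $f_{1,\infty}=(f_1,f_2,\dots)$ of surjective continuous maps from $I=[0,1]$ to itself (not converging uniformly) such that the nonautonomous system $(I,f_{1,\infty})$ has positive topological entropy, $h(f_{1,\infty})>0$, and is not Li–Yorke chaotic.
   Context: A nonautonomous dynamical system (NDS) $(X,f_{1,\infty})$ consists of a compact metric space $(X,\varrho)$ and a sequence $f_{1,\infty}=(f_n)_{n\ge1}$ of continuous maps $X\to X$, with iterates $f_1^0(x)=x$, $f_1^n=f_n\circ\dots\circ f_1$. Li–Yorke pair: distinct $x,y$ with $\limsup_{n}\varrho(f_1^n(x),f_1^n(y))>0$ and $\liminf_{n}\varrho(f_1^n(x),f_1^n(y))=0$; the NDS is Li–Yorke chaotic if $X$ contains an uncountable set any two distinct points of which form a Li–Yorke pair. Topological entropy: put $\varrho_n(x,y)=\max_{0\le j\le n-1}\varrho(f_1^{j}(x),f_1^{j}(y))$; $E$ is $(n,\varepsilon)$-separated if $\varrho_n(x,y)>\varepsilon$ for distinct $x,y\in E$; with $s_n(\varepsilon)$ the maximal cardinality of such a set, $h(f_{1,\infty})=\lim_{\varepsilon\to0}\limsup_{n\to\infty}\frac1n\log s_n(\varepsilon)$. *)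

theory Defs
  imports "HOL-Analysis.Analysis"
begin

text \<open>A nonautonomous system is given by a sequence f :: nat => 'a => 'a of maps;
  only f 1, f 2, ... are used (f 0 is ignored). nds_iter f n = f n o ... o f 1.\<close>

fun nds_iter :: "(nat \<Rightarrow> 'a \<Rightarrow> 'a) \<Rightarrow> nat \<Rightarrow> 'a \<Rightarrow> 'a" where
  "nds_iter f 0 x = x"
| "nds_iter f (Suc n) x = f (Suc n) (nds_iter f n x)"

definition li_yorke_pair :: "(nat \<Rightarrow> 'a::metric_space \<Rightarrow> 'a) \<Rightarrow> 'a \<Rightarrow> 'a \<Rightarrow> bool" where
  "li_yorke_pair f x y \<longleftrightarrow> x \<noteq> y \<and>
     limsup (\<lambda>n. ereal (dist (nds_iter f n x) (nds_iter f n y))) > 0 \<and>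
     liminf (\<lambda>n. ereal (dist (nds_iter f n x) (nds_iter f n y))) = 0"

definition li_yorke_chaotic :: "'a::metric_space set \<Rightarrow> (nat \<Rightarrow> 'a \<Rightarrow> 'a) \<Rightarrow> bool" where
  "li_yorke_chaotic X f \<longleftrightarrow>
     (\<exists>S. S \<subseteq> X \<and> uncountable S \<and>
        (\<forall>x\<in>S. \<forall>y\<in>S. x \<noteq> y \<longrightarrow> li_yorke_pair f x y))"

definition bowen_dist :: "(nat \<Rightarrow> 'a::metric_space \<Rightarrow> 'a) \<Rightarrow> nat \<Rightarrow> 'a \<Rightarrow> 'a \<Rightarrow> real" where
  "bowen_dist f n x y = Max (insert 0 ((\<lambda>j. dist (nds_iter f j x) (nds_iter f j y)) ` {..<n}))"

definition separated_set :: "'a::metric_space set \<Rightarrow> (nat \<Rightarrow> 'a \<Rightarrow> 'a) \<Rightarrow> nat \<Rightarrow> real \<Rightarrow> 'a set \<Rightarrow> bool" where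
  "separated_set X f n \<epsilon> E \<longleftrightarrow> E \<subseteq> X \<and>
     (\<forall>x\<in>E. \<forall>y\<in>E. x \<noteq> y \<longrightarrow> bowen_dist f n x y > \<epsilon>)"

text \<open>Maximal cardinality of an (n,eps)-separated set (finite on compact X).\<close>
definition sep_number :: "'a::metric_space set \<Rightarrow> (nat \<Rightarrow> 'a \<Rightarrow> 'a) \<Rightarrow> nat \<Rightarrow> real \<Rightarrow> nat" where
  "sep_number X f n \<epsilon> = Sup {card E | E. finite E \<and> separated_set X f n \<epsilon> E}"

definition nds_entropy :: "'a::metric_space set \<Rightarrow> (nat \<Rightarrow> 'a \<Rightarrow> 'a) \<Rightarrow> ereal" where
  "nds_entropy X f = Lim (at_right (0::real))
     (\<lambda>\<epsilon>. limsup (\<lambda>n. ereal (ln (real (sep_number X f n \<epsilon>)) / real n)))"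

end

theory Submission imports Defs begin

text \<open>The system applies the doubling map v \<mapsto> min (2v) 1 at the times n = 2^k and, at all other
  times, a map that is the identity outside [1/4, 1/2] and a copy of the three-branch tent map on
  [1/4, 1/2]. Entropy: during the block 2^k < n < 2^(k+1) the tent map reads off 2^k - 1 ternary
  digits of a point of the window, and the points of scale 2^-(k+1) are blown up onto the window by
  the k + 1 preceding doublings; this gives 2^(2^k - 1) points that are (2^(k+1), 1/24)-separated,
  hence exponential growth rate at least (ln 2)/4. No Li-Yorke chaos: the window maps never push a
  point below min v (1/4), so the doublings drive every x > 0 into the fixed point 1 in finite time,
  and any two such orbits eventually coincide. The maps f_(2^k) = doubling and f_(2^k+1) disagree
  at 1/2, so the sequence does not even converge pointwise.\<close>

lemma nds_iter_const_block:
  assumes "\<And>j. m < j \<Longrightarrow> j \<le> m + i \<Longrightarrow> f j = g"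
  shows "nds_iter f (m + i) x = (g ^^ i) (nds_iter f m x)"
  using assms by (induction i) auto

lemma dist_nds_iter_le:
  assumes "\<And>n. L-lipschitz_on UNIV (f n)"
  shows "dist (nds_iter f n x) (nds_iter f n y) \<le> L ^ n * dist x y"
proof (induction n)
  case (Suc n)
  have "dist (nds_iter f (Suc n) x) (nds_iter f (Suc n) y)
      \<le> L * dist (nds_iter f n x) (nds_iter f n y)"
    using lipschitz_onD[OF assms] by simp
  also have "\<dots> \<le> L * (L ^ n * dist x y)"
    using Suc lipschitz_on_nonneg[OF assms] by (rule mult_left_mono)
  finally show ?case by (simp add: mult.assoc)
qed simp

lemma dist_nds_iter_le_bowen_dist:
  "j < n \<Longrightarrow> dist (nds_iter f j x) (nds_iter f j y) \<le> bowen_dist f n x y"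
  unfolding bowen_dist_def by (intro Max_ge) auto

lemma bowen_dist_refl: "bowen_dist f n x x = 0"
  unfolding bowen_dist_def by (cases "n = 0") (auto simp: image_constant_conv)

lemma bowen_dist_le_lipschitz:
  assumes "\<And>n. L-lipschitz_on UNIV (f n)" and "1 \<le> L"
  shows "bowen_dist f n x y \<le> L ^ n * dist x y"
  unfolding bowen_dist_def
proof (rule Max.boundedI)
  fix a assume "a \<in> insert 0 ((\<lambda>j. dist (nds_iter f j x) (nds_iter f j y)) ` {..<n})"
  then consider "a = 0" | j where "j < n" "a = dist (nds_iter f j x) (nds_iter f j y)"
    by auto
  then show "a \<le> L ^ n * dist x y"
  proof cases
    case 1
    then show ?thesis using assms(2) by simp
  next
    case 2
    have "a \<le> L ^ j * dist x y" using 2 dist_nds_iter_le[OF assms(1)] by simp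
    also have "\<dots> \<le> L ^ n * dist x y"
      using 2 assms(2) by (intro mult_right_mono power_increasing) auto
    finally show ?thesis .
  qed
qed auto

lemma card_le_if_separated_in_unit_interval:
  fixes E :: "real set"
  assumes "E \<subseteq> {0..1}" and "0 < \<delta>"
    and far: "\<And>x y. x \<in> E \<Longrightarrow> y \<in> E \<Longrightarrow> x \<noteq> y \<Longrightarrow> \<delta> \<le> dist x y"
  shows "card E \<le> Suc (nat \<lfloor>1 / \<delta>\<rfloor>)"
proof -
  define g where "g x = nat \<lfloor>x / \<delta>\<rfloor>" for x
  have "inj_on g E"
  proof (rule inj_onI, rule ccontr)
    fix x y assume xy: "x \<in> E" "y \<in> E" "g x = g y" "x \<noteq> y"
    have "0 \<le> x / \<delta>" "0 \<le> y / \<delta>" using xy assms(1,2) by auto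
    then have "\<lfloor>x / \<delta>\<rfloor> = \<lfloor>y / \<delta>\<rfloor>"
      using xy(3) unfolding g_def by (metis eq_nat_nat_iff zero_le_floor)
    then have "\<bar>x / \<delta> - y / \<delta>\<bar> < 1" by linarith
    then have "dist x y < \<delta>" using assms(2) by (simp add: dist_real_def field_simps abs_less_iff)
    then show False using far[OF xy(1,2,4)] by linarith
  qed
  moreover have "g ` E \<subseteq> {0..nat \<lfloor>1 / \<delta>\<rfloor>}"
  proof
    fix z assume "z \<in> g ` E"
    then obtain x where x: "x \<in> E" "z = g x" by auto
    then have "x / \<delta> \<le> 1 / \<delta>" using assms(1,2) by (intro divide_right_mono) auto
    then show "z \<in> {0..nat \<lfloor>1 / \<delta>\<rfloor>}" unfolding x g_def by (auto intro!: nat_mono floor_mono)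
  qed
  ultimately have "card E \<le> card {0..nat \<lfloor>1 / \<delta>\<rfloor>}"
    using card_mono[OF finite_atLeastAtMost] card_image by metis
  then show ?thesis by simp
qed

lemma bdd_above_card_separated_sets:
  fixes f :: "nat \<Rightarrow> real \<Rightarrow> real"
  assumes lip: "\<And>n. L-lipschitz_on UNIV (f n)" and "1 \<le> L" and "0 < \<epsilon>"
  shows "bdd_above {card E | E. finite E \<and> separated_set {0..1} f n \<epsilon> E}"
proof -
  have "card E \<le> Suc (nat \<lfloor>L ^ n / \<epsilon>\<rfloor>)" if sep: "separated_set {0..1} f n \<epsilon> E" for E
  proof -
    have Ln: "0 < L ^ n" using \<open>1 \<le> L\<close> by simp
    have "\<epsilon> / L ^ n \<le> dist x y" if "x \<in> E" "y \<in> E" "x \<noteq> y" for x y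
    proof -
      have "\<epsilon> < bowen_dist f n x y" using sep that unfolding separated_set_def by blast
      also have "\<dots> \<le> L ^ n * dist x y" by (rule bowen_dist_le_lipschitz[OF lip \<open>1 \<le> L\<close>])
      finally show ?thesis using Ln by (simp add: pos_divide_le_eq mult.commute)
    qed
    moreover have "E \<subseteq> {0..1}" using sep unfolding separated_set_def by blast
    ultimately show ?thesis
      using card_le_if_separated_in_unit_interval[of E "\<epsilon> / L ^ n"] Ln \<open>0 < \<epsilon>\<close> by simp
  qed
  then show ?thesis by (intro bdd_aboveI) blast
qed

lemma card_le_sep_number:
  assumes "bdd_above {card E | E. finite E \<and> separated_set X f n \<epsilon> E}"
    and "finite E" and "separated_set X f n \<epsilon> E"
  shows "card E \<le> sep_number X f n \<epsilon>"
  unfolding sep_number_def using assms by (intro cSup_upper) auto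

lemma sep_number_pos:
  assumes "bdd_above {card E | E. finite E \<and> separated_set X f n \<epsilon> E}" and "x \<in> X"
  shows "0 < sep_number X f n \<epsilon>"
  using card_le_sep_number[OF assms(1), of "{x}"] assms(2) by (simp add: separated_set_def)

lemma sep_number_antimono:
  assumes "bdd_above {card E | E. finite E \<and> separated_set X f n \<epsilon> E}" and "\<epsilon> \<le> \<epsilon>'"
  shows "sep_number X f n \<epsilon>' \<le> sep_number X f n \<epsilon>"
  unfolding sep_number_def
proof (rule cSup_subset_mono)
  show "{card E | E. finite E \<and> separated_set X f n \<epsilon>' E} \<noteq> {}"
    by (auto simp: separated_set_def intro!: exI[of _ "{}"])
  show "{card E | E. finite E \<and> separated_set X f n \<epsilon>' E}
      \<subseteq> {card E | E. finite E \<and> separated_set X f n \<epsilon> E}"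
    using assms(2) unfolding separated_set_def by fastforce
qed (use assms(1) in simp)

lemma tendsto_at_right_0_antimono:
  fixes F :: "real \<Rightarrow> 'a::{complete_linorder, linorder_topology}"
  assumes antimono: "\<And>e e'. 0 < e \<Longrightarrow> e \<le> e' \<Longrightarrow> F e' \<le> F e"
  shows "(F \<longlongrightarrow> (SUP e\<in>{0<..}. F e)) (at_right 0)"
proof (rule order_tendstoI)
  fix a assume "a < (SUP e\<in>{0<..}. F e)"
  then obtain e0 where e0: "0 < e0" "a < F e0" by (auto simp: less_SUP_iff)
  show "eventually (\<lambda>e. a < F e) (at_right 0)"
    unfolding eventually_at_right_field
    using e0 antimono by (intro exI[of _ e0]) (auto intro: less_le_trans)
next
  fix a assume less: "(SUP e\<in>{0<..}. F e) < a"
  show "eventually (\<lambda>e. F e < a) (at_right 0)"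
    using eventually_at_right_less[of 0]
  proof (rule eventually_mono)
    fix e :: real assume "0 < e"
    then show "F e < a" using less by (meson SUP_upper greaterThan_iff le_less_trans)
  qed
qed

lemma le_limsup_if_frequently:
  fixes u :: "nat \<Rightarrow> 'a::complete_linorder"
  assumes "\<exists>\<^sub>F n in sequentially. c \<le> u n"
  shows "c \<le> limsup u"
  unfolding limsup_INF_SUP
proof (rule INF_greatest)
  fix N
  obtain n where "N \<le> n" "c \<le> u n" using assms unfolding frequently_sequentially by blast
  then show "c \<le> (SUP m\<in>{N..}. u m)" by (intro SUP_upper2) auto
qed

text \<open>The defining limit in nds_entropy exists and is the supremum over \<epsilon>, because the
  separation numbers grow as \<epsilon> decreases.\<close>
lemma nds_entropy_ge:
  assumes bdd: "\<And>n \<epsilon>. 0 < \<epsilon> \<Longrightarrow> bdd_above {card E | E. finite E \<and> separated_set X f n \<epsilon> E}"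
    and "x \<in> X" and "0 < \<epsilon>"
  shows "limsup (\<lambda>n. ereal (ln (real (sep_number X f n \<epsilon>)) / real n)) \<le> nds_entropy X f"
proof -
  define F where "F e = limsup (\<lambda>n. ereal (ln (real (sep_number X f n e)) / real n))" for e
  have "F e' \<le> F e" if "0 < e" "e \<le> e'" for e e'
    unfolding F_def
  proof (intro Limsup_mono always_eventually allI)
    fix n
    have "0 < sep_number X f n e'" using sep_number_pos[OF bdd \<open>x \<in> X\<close>] that by simp
    moreover have "sep_number X f n e' \<le> sep_number X f n e"
      using sep_number_antimono[OF bdd] that by simp
    ultimately have "ln (real (sep_number X f n e')) \<le> ln (real (sep_number X f n e))"
      by simp
    then show "ereal (ln (real (sep_number X f n e')) / real n)
        \<le> ereal (ln (real (sep_number X f n e)) / real n)"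
      by (simp add: divide_right_mono)
  qed
  then have "nds_entropy X f = (SUP e\<in>{0<..}. F e)"
    unfolding nds_entropy_def F_def[symmetric]
    by (intro tendsto_Lim tendsto_at_right_0_antimono) auto
  then show ?thesis using \<open>0 < \<epsilon>\<close> by (auto simp: F_def[symmetric] intro: SUP_upper)
qed

lemma not_li_yorke_chaotic_if_asymptotic:
  assumes "countable C"
    and asymptotic: "\<And>x y. x \<in> X - C \<Longrightarrow> y \<in> X - C \<Longrightarrow>
      (\<lambda>n. dist (nds_iter f n x) (nds_iter f n y)) \<longlonglongrightarrow> 0"
  shows "\<not> li_yorke_chaotic X f"
proof
  assume "li_yorke_chaotic X f"
  then obtain S where S: "S \<subseteq> X" "uncountable S"
    and ly: "\<And>x y. x \<in> S \<Longrightarrow> y \<in> S \<Longrightarrow> x \<noteq> y \<Longrightarrow> li_yorke_pair f x y"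
    unfolding li_yorke_chaotic_def by blast
  have "infinite (S - C)" using uncountable_minus_countable[OF S(2) assms(1)] uncountable_infinite by blast
  then obtain x where x: "x \<in> S - C" by (metis finite.emptyI ex_in_conv)
  have "infinite (S - C - {x})" using \<open>infinite (S - C)\<close> by simp
  then obtain y where y: "y \<in> S - C - {x}" by (metis finite.emptyI ex_in_conv)
  have "(\<lambda>n. ereal (dist (nds_iter f n x) (nds_iter f n y))) \<longlonglongrightarrow> 0"
    using asymptotic[of x y] x y S(1) by (auto simp: zero_ereal_def)
  then have "limsup (\<lambda>n. ereal (dist (nds_iter f n x) (nds_iter f n y))) = 0"
    by (rule lim_imp_Limsup[OF trivial_limit_sequentially])
  moreover have "li_yorke_pair f x y" using ly x y by auto
  ultimately show False unfolding li_yorke_pair_def by simp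
qed

definition tent3 :: "real \<Rightarrow> real" where
  "tent3 u = 3 * u - 6 * max 0 (u - 1/3) + 6 * max 0 (u - 2/3)"

lemma tent3_range: "0 \<le> u \<Longrightarrow> u \<le> 1 \<Longrightarrow> 0 \<le> tent3 u \<and> tent3 u \<le> 1"
  unfolding tent3_def by (auto simp: max_def)

lemma funpow_tent3_range: "0 \<le> u \<Longrightarrow> u \<le> 1 \<Longrightarrow> 0 \<le> (tent3 ^^ i) u \<and> (tent3 ^^ i) u \<le> 1"
  by (induction i) (auto simp: tent3_range)

fun ternary_code :: "bool list \<Rightarrow> real" where
  "ternary_code [] = 0"
| "ternary_code (a # w) = ((if a then 2 else 0) + ternary_code w) / 3"

lemma ternary_code_range: "0 \<le> ternary_code w \<and> ternary_code w \<le> 1"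
  by (induction w) auto

lemma tent3_ternary_code_Cons: "tent3 (ternary_code (a # w)) = ternary_code w"
  using ternary_code_range[of w] unfolding tent3_def by (auto simp: max_def field_simps)

lemma funpow_tent3_ternary_code:
  "i \<le> length w \<Longrightarrow> (tent3 ^^ i) (ternary_code w) = ternary_code (drop i w)"
proof (induction i arbitrary: w)
  case (Suc i)
  then obtain a w' where w: "w = a # w'" by (cases w) auto
  have "(tent3 ^^ Suc i) (ternary_code w) = (tent3 ^^ i) (ternary_code w')"
    by (simp only: funpow_Suc_right o_apply w tent3_ternary_code_Cons)
  also have "\<dots> = ternary_code (drop (Suc i) w)" using Suc by (simp add: w)
  finally show ?case .
qed simp

lemma dist_ternary_code_Cons:
  "a \<noteq> b \<Longrightarrow> 1/3 \<le> dist (ternary_code (a # w)) (ternary_code (b # w'))"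
  using ternary_code_range[of w] ternary_code_range[of w']
  by (cases a; cases b) (auto simp: dist_real_def field_simps)

definition clamp01 :: "real \<Rightarrow> real" where "clamp01 u = max 0 (min 1 u)"

text \<open>The identity outside [1/4, 1/2] and tent3 conjugated by u \<mapsto> (1 + u)/4 on it; the clamp
  turns the piecewise definition into one expression that is visibly continuous.\<close>
definition window_tent3 :: "real \<Rightarrow> real" where
  "window_tent3 v = v + (tent3 (clamp01 (4 * v - 1)) - clamp01 (4 * v - 1)) / 4"

definition doubling :: "real \<Rightarrow> real" where "doubling v = min (2 * v) 1"

lemma window_tent3_conj: "0 \<le> u \<Longrightarrow> u \<le> 1 \<Longrightarrow> window_tent3 ((1 + u) / 4) = (1 + tent3 u) / 4"
  unfolding window_tent3_def clamp01_def by (auto simp: max_def min_def field_simps)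

lemma window_tent3_outside: "v \<le> 1/4 \<or> 1/2 \<le> v \<Longrightarrow> window_tent3 v = v"
  unfolding window_tent3_def clamp01_def tent3_def by (auto simp: max_def min_def)

lemma funpow_window_tent3_conj:
  assumes "0 \<le> u" "u \<le> 1"
  shows "(window_tent3 ^^ i) ((1 + u) / 4) = (1 + (tent3 ^^ i) u) / 4"
proof (induction i)
  case (Suc i)
  have "(window_tent3 ^^ Suc i) ((1 + u) / 4) = window_tent3 ((1 + (tent3 ^^ i) u) / 4)"
    by (simp only: funpow.simps(2) o_apply Suc.IH)
  also have "\<dots> = (1 + (tent3 ^^ Suc i) u) / 4"
    using funpow_tent3_range[OF assms, of i] window_tent3_conj by simp
  finally show ?case .
qed simp

lemma funpow_window_tent3_outside: "v \<le> 1/4 \<or> 1/2 \<le> v \<Longrightarrow> (window_tent3 ^^ i) v = v"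
  by (induction i) (auto simp: window_tent3_outside)

lemma funpow_window_tent3_bounds:
  assumes "0 \<le> v" "v \<le> 1"
  shows "min v (1/4) \<le> (window_tent3 ^^ i) v \<and> (window_tent3 ^^ i) v \<le> 1"
proof (cases "v \<le> 1/4 \<or> 1/2 \<le> v")
  case True
  then show ?thesis using assms funpow_window_tent3_outside by auto
next
  case False
  then have "0 \<le> 4 * v - 1" "4 * v - 1 \<le> 1" "v = (1 + (4 * v - 1)) / 4" by auto
  then show ?thesis
    using funpow_window_tent3_conj[of "4 * v - 1" i] funpow_tent3_range[of "4 * v - 1" i]
    by auto
qed

lemma window_tent3_image: "window_tent3 ` {0..1} = {0..1}"
proof
  show "window_tent3 ` {0..1} \<subseteq> {0..1}"
    using funpow_window_tent3_bounds[where i = 1] by force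
  show "{0..1} \<subseteq> window_tent3 ` {0..1}"
  proof
    fix y :: real assume y: "y \<in> {0..1}"
    show "y \<in> window_tent3 ` {0..1}"
    proof (cases "y \<le> 1/4 \<or> 1/2 \<le> y")
      case True
      then show ?thesis using y window_tent3_outside by (metis image_eqI)
    next
      case False
      define u where "u = (4 * y - 1) / 3"
      have u: "0 \<le> u" "u \<le> 1/3" using False by (auto simp: u_def)
      then have "tent3 u = 3 * u" by (simp add: tent3_def)
      then have "window_tent3 ((1 + u) / 4) = y"
        using u window_tent3_conj[of u] by (simp add: u_def field_simps)
      then show ?thesis using u by (intro image_eqI[of _ _ "(1 + u) / 4"]) auto
    qed
  qed
qed

lemma doubling_image: "doubling ` {0..1} = {0..1}"
proof
  show "doubling ` {0..1} \<subseteq> {0..1}" unfolding doubling_def by auto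
  show "{0..1} \<subseteq> doubling ` {0..1}"
  proof
    fix y :: real assume "y \<in> {0..1}"
    then show "y \<in> doubling ` {0..1}" by (intro image_eqI[of _ _ "y / 2"]) (auto simp: doubling_def)
  qed
qed

lemma continuous_on_window_tent3: "continuous_on S window_tent3"
  unfolding window_tent3_def tent3_def clamp01_def by (intro continuous_intros) auto

lemma continuous_on_doubling: "continuous_on S doubling"
  unfolding doubling_def by (intro continuous_intros)

lemma lipschitz_window_tent3: "3-lipschitz_on UNIV window_tent3"
  unfolding lipschitz_on_def window_tent3_def tent3_def clamp01_def dist_real_def
  by (auto simp: max_def min_def abs_if field_simps)

lemma lipschitz_doubling: "2-lipschitz_on UNIV doubling"
  unfolding lipschitz_on_def doubling_def dist_real_def by (auto simp: min_def abs_if)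

definition example_nds :: "nat \<Rightarrow> real \<Rightarrow> real" where
  "example_nds n = (if \<exists>k. n = 2 ^ k then doubling else window_tent3)"

lemma example_nds_power2: "example_nds (2 ^ k) = doubling"
  unfolding example_nds_def by auto

lemma example_nds_between:
  assumes "2 ^ k < n" "n < 2 ^ Suc k"
  shows "example_nds n = window_tent3"
proof -
  have "n \<noteq> 2 ^ b" for b
  proof
    assume "n = 2 ^ b"
    then have "k < b" "b < Suc k"
      using assms by (metis power_less_imp_less_exp one_less_numeral_iff semiring_norm(76))+
    then show False by simp
  qed
  then show ?thesis unfolding example_nds_def by auto
qed

lemma continuous_on_example_nds: "continuous_on S (example_nds n)"
  unfolding example_nds_def using continuous_on_doubling continuous_on_window_tent3 by simp

lemma example_nds_image: "example_nds n ` {0..1} = {0..1}"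
  unfolding example_nds_def using doubling_image window_tent3_image by simp

lemma lipschitz_example_nds: "3-lipschitz_on UNIV (example_nds n)"
  unfolding example_nds_def
  using lipschitz_window_tent3 lipschitz_on_le[OF lipschitz_doubling, of 3] by simp

lemma example_nds_fixes_1: "example_nds n 1 = 1"
  unfolding example_nds_def by (simp add: doubling_def window_tent3_outside)

lemma nds_iter_example_range:
  assumes "0 \<le> x" "x \<le> 1"
  shows "0 \<le> nds_iter example_nds n x \<and> nds_iter example_nds n x \<le> 1"
proof (induction n)
  case 0
  show ?case using assms by simp
next
  case (Suc n)
  have "nds_iter example_nds n x \<in> {0..1}" using Suc.IH by simp
  then have "example_nds (Suc n) (nds_iter example_nds n x) \<in> example_nds (Suc n) ` {0..1}"
    by (rule imageI)
  then show ?case unfolding example_nds_image by simp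
qed

lemma nds_iter_example_block:
  "i < 2 ^ k \<Longrightarrow> nds_iter example_nds (2 ^ k + i) x = (window_tent3 ^^ i) (nds_iter example_nds (2 ^ k) x)"
  by (rule nds_iter_const_block) (auto intro!: example_nds_between[of k])

lemma nds_iter_example_power2_Suc:
  "nds_iter example_nds (2 ^ Suc k) x =
     doubling ((window_tent3 ^^ (2 ^ k - 1)) (nds_iter example_nds (2 ^ k) x))"
proof -
  have "(2::nat) ^ Suc k = Suc (2 ^ k + (2 ^ k - 1))" by simp
  then have "nds_iter example_nds (2 ^ Suc k) x =
      example_nds (2 ^ Suc k) (nds_iter example_nds (2 ^ k + (2 ^ k - 1)) x)"
    by (simp only: nds_iter.simps)
  moreover have "nds_iter example_nds (2 ^ k + (2 ^ k - 1)) x =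
      (window_tent3 ^^ (2 ^ k - 1)) (nds_iter example_nds (2 ^ k) x)"
    by (rule nds_iter_example_block) simp
  ultimately show ?thesis by (simp only: example_nds_power2)
qed

lemma nds_iter_example_small:
  "0 \<le> x \<Longrightarrow> 2 ^ Suc k * x \<le> 1/2 \<Longrightarrow> nds_iter example_nds (2 ^ k) x = 2 ^ Suc k * x"
proof (induction k)
  case 0
  then show ?case using example_nds_power2[of 0] by (simp add: doubling_def)
next
  case (Suc k)
  have small: "2 ^ Suc k * x \<le> 1/4" using Suc.prems by simp
  then have "nds_iter example_nds (2 ^ k) x = 2 ^ Suc k * x" using Suc by simp
  then have "nds_iter example_nds (2 ^ Suc k) x = doubling ((window_tent3 ^^ (2 ^ k - 1)) (2 ^ Suc k * x))"
    by (simp only: nds_iter_example_power2_Suc)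
  also have "\<dots> = doubling (2 ^ Suc k * x)" using small by (simp add: funpow_window_tent3_outside)
  also have "\<dots> = 2 ^ Suc (Suc k) * x" using Suc.prems by (simp add: doubling_def)
  finally show ?case .
qed

definition coded_point :: "nat \<Rightarrow> bool list \<Rightarrow> real" where
  "coded_point k w = (1 + ternary_code w) / (4 * 2 ^ Suc k)"

lemma coded_point_range: "0 \<le> coded_point k w \<and> coded_point k w \<le> 1"
proof -
  have "(1::real) \<le> 2 ^ Suc k" by (rule one_le_power) simp
  then show ?thesis
    using ternary_code_range[of w] unfolding coded_point_def by (auto simp: field_simps)
qed

lemma nds_iter_coded_point:
  assumes "i < 2 ^ k" "length w = 2 ^ k - 1"
  shows "nds_iter example_nds (2 ^ k + i) (coded_point k w) = (1 + ternary_code (drop i w)) / 4"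
proof -
  have c: "0 \<le> ternary_code w" "ternary_code w \<le> 1" using ternary_code_range[of w] by auto
  have "nds_iter example_nds (2 ^ k) (coded_point k w) = 2 ^ Suc k * coded_point k w"
    using c by (intro nds_iter_example_small) (auto simp: coded_point_def)
  also have "\<dots> = (1 + ternary_code w) / 4" by (simp add: coded_point_def)
  finally have start: "nds_iter example_nds (2 ^ k) (coded_point k w) = (1 + ternary_code w) / 4" .
  have "nds_iter example_nds (2 ^ k + i) (coded_point k w) = (window_tent3 ^^ i) ((1 + ternary_code w) / 4)"
    by (simp only: nds_iter_example_block[OF assms(1)] start)
  also have "\<dots> = (1 + (tent3 ^^ i) (ternary_code w)) / 4" by (rule funpow_window_tent3_conj[OF c])
  also have "\<dots> = (1 + ternary_code (drop i w)) / 4" using assms by (simp add: funpow_tent3_ternary_code)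
  finally show ?thesis .
qed

lemma bowen_dist_coded_points:
  assumes "length w1 = 2 ^ k - 1" "length w2 = 2 ^ k - 1" "w1 \<noteq> w2"
  shows "1/12 \<le> bowen_dist example_nds (2 ^ Suc k) (coded_point k w1) (coded_point k w2)"
proof -
  have "\<exists>i < 2 ^ k - 1. w1 ! i \<noteq> w2 ! i"
  proof (rule ccontr)
    assume "\<not> (\<exists>i < 2 ^ k - 1. w1 ! i \<noteq> w2 ! i)"
    then have "w1 = w2" using assms(1,2) by (intro nth_equalityI) auto
    with assms(3) show False by simp
  qed
  then obtain i where i: "i < 2 ^ k - 1" "w1 ! i \<noteq> w2 ! i" by blast
  have drop: "drop i w = (w ! i) # drop (Suc i) w" if "length w = 2 ^ k - 1" for w
    using i(1) that by (simp add: Cons_nth_drop_Suc)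
  have "1/12 \<le> dist (ternary_code (drop i w1)) (ternary_code (drop i w2)) / 4"
    using dist_ternary_code_Cons[OF i(2)] unfolding drop[OF assms(1)] drop[OF assms(2)] by simp
  also have "\<dots> = dist (nds_iter example_nds (2 ^ k + i) (coded_point k w1))
                       (nds_iter example_nds (2 ^ k + i) (coded_point k w2))"
    using i(1) assms unfolding dist_real_def
    by (simp add: nds_iter_coded_point diff_divide_distrib[symmetric])
  also have "\<dots> \<le> bowen_dist example_nds (2 ^ Suc k) (coded_point k w1) (coded_point k w2)"
    using i(1) by (intro dist_nds_iter_le_bowen_dist) simp
  finally show ?thesis .
qed

lemma bdd_above_card_separated_sets_example:
  "0 < \<epsilon> \<Longrightarrow> bdd_above {card E | E. finite E \<and> separated_set {0..1} example_nds n \<epsilon> E}"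
  by (rule bdd_above_card_separated_sets[OF lipschitz_example_nds]) auto

lemma sep_number_example_ge: "2 ^ (2 ^ k - 1) \<le> sep_number {0..1} example_nds (2 ^ Suc k) (1/24)"
proof -
  define W where "W = {w :: bool list. length w = 2 ^ k - 1}"
  have far: "1/24 < bowen_dist example_nds (2 ^ Suc k) (coded_point k w1) (coded_point k w2)"
    if "w1 \<in> W" "w2 \<in> W" "w1 \<noteq> w2" for w1 w2
  proof -
    have "1/12 \<le> bowen_dist example_nds (2 ^ Suc k) (coded_point k w1) (coded_point k w2)"
      using that unfolding W_def by (intro bowen_dist_coded_points) simp_all
    then show ?thesis by linarith
  qed
  have "inj_on (coded_point k) W"
  proof (rule inj_onI, rule ccontr)
    fix w1 w2 assume w: "w1 \<in> W" "w2 \<in> W" "coded_point k w1 = coded_point k w2" "w1 \<noteq> w2"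
    have "1/24 < bowen_dist example_nds (2 ^ Suc k) (coded_point k w1) (coded_point k w2)"
      using far w(1,2,4) .
    then show False unfolding w(3) bowen_dist_refl by simp
  qed
  moreover have "card W = 2 ^ (2 ^ k - 1)"
    using card_lists_length_eq[of "UNIV :: bool set" "2 ^ k - 1"] unfolding W_def by simp
  ultimately have card: "card (coded_point k ` W) = 2 ^ (2 ^ k - 1)" by (simp add: card_image)
  have fin: "finite (coded_point k ` W)"
    using finite_lists_length_eq[of "UNIV :: bool set"] unfolding W_def by simp
  have sep: "separated_set {0..1} example_nds (2 ^ Suc k) (1/24) (coded_point k ` W)"
    unfolding separated_set_def
  proof (intro conjI ballI impI)
    show "coded_point k ` W \<subseteq> {0..1}" using coded_point_range by auto
    fix x y assume "x \<in> coded_point k ` W" "y \<in> coded_point k ` W" "x \<noteq> y"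
    then show "1/24 < bowen_dist example_nds (2 ^ Suc k) x y" using far by blast
  qed
  have bdd: "bdd_above {card E | E. finite E \<and> separated_set {0..1} example_nds (2 ^ Suc k) (1/24) E}"
    by (rule bdd_above_card_separated_sets_example) simp
  show ?thesis using card_le_sep_number[OF bdd fin sep] unfolding card .
qed

lemma ln_sep_number_example_ge:
  assumes "1 \<le> k"
  shows "ln 2 / 4 \<le> ln (real (sep_number {0..1} example_nds (2 ^ Suc k) (1/24))) / real (2 ^ Suc k :: nat)"
proof -
  let ?s = "real (sep_number {0..1} example_nds (2 ^ Suc k) (1/24))"
  have s: "(2::real) ^ (2 ^ k - 1) \<le> ?s"
    using sep_number_example_ge[of k] by (metis numeral_power_le_of_nat_cancel_iff)
  have pos: "0 < (2::real) ^ (2 ^ k - 1)" by simp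
  have "ln ((2::real) ^ (2 ^ k - 1)) \<le> ln ?s"
    by (subst ln_le_cancel_iff) (use pos s in linarith)+
  then have l: "real (2 ^ k - 1) * ln 2 \<le> ln ?s" by (simp add: ln_realpow)
  have "real (2 ^ Suc k :: nat) \<le> 4 * real (2 ^ k - 1 :: nat)"
    using assms power_increasing[of 1 k "2::nat"] power_increasing[of 1 k "2::real"]
    by (simp add: of_nat_diff)
  then have "ln 2 / 4 * real (2 ^ Suc k :: nat) \<le> ln 2 / 4 * (4 * real (2 ^ k - 1 :: nat))"
    by (intro mult_left_mono) auto
  also have "\<dots> = real (2 ^ k - 1) * ln 2" by simp
  also note l
  finally show ?thesis by (simp add: pos_le_divide_eq)
qed

lemma example_nds_entropy_pos: "0 < nds_entropy {0..1} example_nds"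
proof -
  have "\<exists>\<^sub>F n in sequentially.
      ereal (ln 2 / 4) \<le> ereal (ln (real (sep_number {0..1} example_nds n (1/24))) / real n)"
    unfolding frequently_sequentially
  proof
    fix N :: nat
    have "N \<le> 2 ^ N" using less_exp[of N] by (rule less_imp_le)
    also have "\<dots> \<le> 2 ^ Suc (Suc N)" by (rule power_increasing) simp_all
    finally have "N \<le> 2 ^ Suc (Suc N)" .
    then show "\<exists>n\<ge>N. ereal (ln 2 / 4) \<le> ereal (ln (real (sep_number {0..1} example_nds n (1/24))) / real n)"
      using ln_sep_number_example_ge[of "Suc N"] by (intro exI[of _ "2 ^ Suc (Suc N)"]) simp
  qed
  then have "ereal (ln 2 / 4) \<le> limsup (\<lambda>n. ereal (ln (real (sep_number {0..1} example_nds n (1/24))) / real n))"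
    by (rule le_limsup_if_frequently)
  also have "\<dots> \<le> nds_entropy {0..1} example_nds"
    by (intro nds_entropy_ge[where x = 0] bdd_above_card_separated_sets_example) auto
  finally show ?thesis by (rule less_le_trans[rotated]) simp
qed

lemma nds_iter_example_eventually_1:
  assumes "0 < x" "x \<le> 1"
  shows "eventually (\<lambda>n. nds_iter example_nds n x = 1) sequentially"
proof -
  define a where "a k = nds_iter example_nds (2 ^ k) x" for k
  have a01: "0 \<le> a k \<and> a k \<le> 1" for k unfolding a_def using nds_iter_example_range assms by auto
  have step: "a (Suc k) = doubling ((window_tent3 ^^ (2 ^ k - 1)) (a k))" for k
    unfolding a_def by (rule nds_iter_example_power2_Suc)
  have grow: "min (2 ^ Suc k * x) (1/2) \<le> a k" for k
  proof (induction k)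
    case 0
    then show ?case using example_nds_power2[of 0] by (simp add: a_def doubling_def)
  next
    case (Suc k)
    define b where "b = (window_tent3 ^^ (2 ^ k - 1)) (a k)"
    define p where "p = 2 ^ Suc k * x"
    have "min (a k) (1/4) \<le> b" using funpow_window_tent3_bounds a01 unfolding b_def by blast
    then have "min p (1/4) \<le> b" using Suc by (auto simp: p_def min_def split: if_splits)
    moreover have eq: "2 ^ Suc (Suc k) * x = 2 * p" by (simp add: p_def)
    ultimately show ?case unfolding step doubling_def b_def[symmetric] eq
      by (auto simp: min_def split: if_splits)
  qed
  obtain k where "1 / (4 * x) < 2 ^ k" using real_arch_pow[of 2 "1 / (4 * x)"] by auto
  then have "1/2 \<le> 2 ^ Suc k * x" using assms by (simp add: field_simps)
  then have half: "1/2 \<le> a k" using grow[of k] by simp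
  then have "a (Suc k) = doubling (a k)" unfolding step by (simp add: funpow_window_tent3_outside)
  then have "nds_iter example_nds (2 ^ Suc k) x = 1" using half a01[of k] by (simp add: a_def doubling_def)
  then have stay: "nds_iter example_nds (2 ^ Suc k + i) x = 1" for i
    by (induction i) (simp_all add: example_nds_fixes_1)
  show ?thesis unfolding eventually_sequentially
  proof (intro exI allI impI)
    fix n :: nat assume "2 ^ Suc k \<le> n"
    then show "nds_iter example_nds n x = 1" using stay[of "n - 2 ^ Suc k"] by simp
  qed
qed

lemma example_nds_not_li_yorke_chaotic: "\<not> li_yorke_chaotic {0..1} example_nds"
proof (rule not_li_yorke_chaotic_if_asymptotic[where C = "{0}"])
  fix x y :: real assume "x \<in> {0..1} - {0}" "y \<in> {0..1} - {0}"
  then have "eventually (\<lambda>n. nds_iter example_nds n x = 1 \<and> nds_iter example_nds n y = 1) sequentially"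
    by (intro eventually_conj nds_iter_example_eventually_1) auto
  then have "eventually (\<lambda>n. dist (nds_iter example_nds n x) (nds_iter example_nds n y) = 0) sequentially"
    by (rule eventually_mono) simp
  then show "(\<lambda>n. dist (nds_iter example_nds n x) (nds_iter example_nds n y)) \<longlonglongrightarrow> 0"
    by (rule tendsto_eventually)
qed simp

lemma example_nds_not_uniform_limit: "\<not> (\<exists>g. uniform_limit {0..1} example_nds g sequentially)"
proof
  assume "\<exists>g. uniform_limit {0..1} example_nds g sequentially"
  then obtain g where "uniform_limit {0..1} example_nds g sequentially" by blast
  then have "(\<lambda>n. example_nds n (1/2)) \<longlonglongrightarrow> g (1/2)" by (rule tendsto_uniform_limitI) simp
  then have "eventually (\<lambda>n. dist (example_nds n (1/2)) (g (1/2)) < 1/4) sequentially"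
    by (rule tendstoD) simp
  then obtain N where N: "\<And>n. N \<le> n \<Longrightarrow> dist (example_nds n (1/2)) (g (1/2)) < 1/4"
    unfolding eventually_sequentially by blast
  define k where "k = Suc N"
  have "N \<le> 2 ^ N" using less_exp[of N] by (rule less_imp_le)
  also have "\<dots> \<le> 2 ^ k" by (rule power_increasing) (simp_all add: k_def)
  finally have "N \<le> 2 ^ k" .
  have "2 ^ k + 1 < (2::nat) ^ Suc k" using one_less_power[of "2::nat" k] by (simp add: k_def)
  then have "example_nds (2 ^ k + 1) (1/2) = 1/2"
    using example_nds_between[of k] window_tent3_outside by simp
  moreover have "N \<le> 2 ^ k + 1" using \<open>N \<le> 2 ^ k\<close> by simp
  ultimately have "dist (1/2) (g (1/2)) < 1/4" using N by metis
  moreover have "dist 1 (g (1/2)) < 1/4"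
    using N[of "2 ^ k"] \<open>N \<le> 2 ^ k\<close> by (simp add: example_nds_power2 doubling_def)
  moreover have "dist (1::real) (1/2) = 1/2" by (simp add: dist_real_def)
  ultimately show False using dist_triangle2[of 1 "1/2" "g (1/2)"] by linarith
qed

theorem mainTheorem2:
  shows "\<exists>f :: nat \<Rightarrow> real \<Rightarrow> real.
    (\<forall>n\<ge>1. continuous_on {0..1} (f n) \<and> f n ` {0..1} = {0..1}) \<and>
    \<not> (\<exists>g. uniform_limit {0..1} f g sequentially) \<and>
    nds_entropy {0..1} f > 0 \<and>
    \<not> li_yorke_chaotic {0..1} f"
  using continuous_on_example_nds example_nds_image example_nds_not_uniform_limit
    example_nds_entropy_pos example_nds_not_li_yorke_chaotic
  by blast

end
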